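(* Let $T\colon\mathbb{R}[x]\to\mathbb{R}[x]$ be the linear transformation determined by $T[x^n]=P_n^{Le}(x)$ for all $n\ge0$, and write $T=\sum_{n=0}^\infty\frac{Q_n^{Le}(x)}{n!}D^n$. Then for all $k\ge0$, $$Q^{Le}_{2k+1}(x)=0,\qquad Q^{Le}_{2k}(x)=\frac{(2k-1)!!}{(2k)!!}(x^2-1)^k.$$ Hence $T=\sum_{k=0}^\infty\frac{(2k-1)!!}{(2k)!!\,(2k)!}(x^2-1)^kD^{2k}$.
   Context: $P_n^{Le}(x)=\frac{1}{2^nn!}\frac{d^n}{dx^n}(x^2-1)^n$ is the $n$th Legendre polynomial; $D=d/dx$. Every linear operator $T\colon\mathbb{C}[x]\to\mathbb{C}[x]$ has a unique representation $T=\sum_{k=0}^\infty \frac{Q_k(x)}{k!}D^k$ with polynomials $Q_k(x)$. Double factorials use the conventions $(-1)!!=1$ and $0!!=1$. *)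

theory Defs
  imports "HOL-Computational_Algebra.Polynomial"
begin

text \<open>Double factorial with the conventions (-1)!! = 1 and 0!! = 1.
  Arguments are natural numbers; (2k-1)!! for k = 0 is written dfact (2*0-1) = dfact 0 = 1.\<close>
fun dfact :: "nat \<Rightarrow> nat" where
  "dfact 0 = 1"
| "dfact (Suc 0) = 1"
| "dfact (Suc (Suc n)) = Suc (Suc n) * dfact n"

definition legendreP :: "nat \<Rightarrow> real poly" where
  "legendreP n = smult (1 / (2 ^ n * fact n)) ((pderiv ^^ n) ([:-1, 0, 1:] ^ n))"

definition legendreT :: "real poly \<Rightarrow> real poly" where
  "legendreT p = (\<Sum>i\<le>degree p. smult (coeff p i) (legendreP i))"

text \<open>Q represents the operator S as sum_k Q_k/k! D^k (finite on each polynomial,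
  since D^k p = 0 for k > degree p).\<close>
definition represents :: "(nat \<Rightarrow> real poly) \<Rightarrow> (real poly \<Rightarrow> real poly) \<Rightarrow> bool" where
  "represents Q S \<longleftrightarrow>
     (\<forall>p. S p = (\<Sum>k\<le>degree p. smult (1 / fact k) (Q k * (pderiv ^^ k) p)))"

end

theory Submission
  imports Defs
begin

(*
  By the Leibniz rule applied to (x^2 - 1)^n = (x - 1)^n (x + 1)^n, the Rodrigues formula becomes
  P_n = 2^-n * sum_k C(n,k)^2 (x + 1)^k (x - 1)^(n-k). With u = x + 1 and v = x - 1 we have
  u v = x^2 - 1 and u + v = 2 x, and a double counting of binomial coefficients rewrites the sum as
  P_n = sum_j C(n,2j) C(2j,j) 4^-j (x^2 - 1)^j x^(n-2j). Since (2j-1)!!/(2j)!! = C(2j,j)/4^j, this is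
  exactly sum_k Q_k/k! D^k x^n for the claimed Q_k, and linearity extends it to all polynomials.
  Conversely the Q_k are unique: D^k x^n vanishes for k > n and D^n x^n = n!, so Q_n is determined
  by T[x^n] and Q_0, ..., Q_(n-1).
*)

lemma higher_pderiv_linear_power:
  fixes a :: "'a :: field_char_0"
  shows "(pderiv ^^ k) ([:a, 1:] ^ n) =
    (if k \<le> n then smult (fact n / fact (n - k)) ([:a, 1:] ^ (n - k)) else 0)"
proof (induction k)
  case 0
  then show ?case by simp
next
  case (Suc k)
  show ?case
  proof (cases "Suc k \<le> n")
    case True
    then have nk: "n - k = Suc (n - Suc k)" by simp
    have "fact (n - k) = of_nat (n - k) * (fact (n - Suc k) :: 'a)"
      by (simp add: nk)
    then have fact_ratio: "fact n / fact (n - k) * of_nat (n - k) = (fact n / fact (n - Suc k) :: 'a)"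
      using True by (simp add: field_simps del: of_nat_diff)
    have "(pderiv ^^ Suc k) ([:a, 1:] ^ n)
        = smult (fact n / fact (n - k)) (pderiv ([:a, 1:] ^ Suc (n - Suc k)))"
      using Suc True by (simp add: pderiv_smult nk del: power_Suc)
    also have "\<dots> = smult (fact n / fact (n - Suc k)) ([:a, 1:] ^ (n - Suc k))"
      by (simp only: pderiv_power_Suc) (simp add: pderiv_pCons flip: fact_ratio nk)
    finally show ?thesis
      using True by simp
  next
    case False
    then show ?thesis
      using Suc by (cases "k = n") (auto simp: pderiv_smult)
  qed
qed

lemma higher_pderiv_mult:
  fixes p q :: "'a :: idom poly"
  shows "(pderiv ^^ n) (p * q) =
    (\<Sum>k\<le>n. smult (of_nat (n choose k)) ((pderiv ^^ k) p * (pderiv ^^ (n - k)) q))"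
proof (induction n)
  case 0
  then show ?case by simp
next
  case (Suc n)
  define D where "D k = (pderiv ^^ k) p" for k
  define E where "E k = (pderiv ^^ k) q" for k
  have pderiv_sum: "pderiv (sum f A) = (\<Sum>x\<in>A. pderiv (f x))" for f :: "nat \<Rightarrow> 'a poly" and A
    using higher_pderiv_sum[of 1 f A] by simp
  have shifted: "(\<Sum>k\<le>n. smult (of_nat (n choose k)) (D k * E (Suc n - k)))
      = D 0 * E (Suc n) + (\<Sum>k\<le>n. smult (of_nat (n choose Suc k)) (D (Suc k) * E (n - k)))"
  proof -
    have "(\<Sum>k\<le>n. smult (of_nat (n choose k)) (D k * E (Suc n - k)))
        = (\<Sum>k\<le>Suc n. smult (of_nat (n choose k)) (D k * E (Suc n - k)))"
      by (simp add: binomial_eq_0)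
    then show ?thesis
      by (simp only: sum.atMost_Suc_shift) simp
  qed
  have "(pderiv ^^ Suc n) (p * q)
      = (\<Sum>k\<le>n. smult (of_nat (n choose k)) (D (Suc k) * E (n - k)))
        + (\<Sum>k\<le>n. smult (of_nat (n choose k)) (D k * E (Suc n - k)))"
    by (simp add: Suc.IH pderiv_sum pderiv_smult pderiv_mult D_def E_def Suc_diff_le
        sum.distrib smult_add_right mult_ac)
  also have "\<dots> = D 0 * E (Suc n)
      + (\<Sum>k\<le>n. smult (of_nat (Suc n choose Suc k)) (D (Suc k) * E (n - k)))"
    by (simp add: shifted sum.distrib smult_add_left algebra_simps)
  also have "\<dots> = (\<Sum>k\<le>Suc n. smult (of_nat (Suc n choose k)) (D k * E (Suc n - k)))"
    by (simp only: sum.atMost_Suc_shift) simp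
  finally show ?case
    by (simp add: D_def E_def)
qed

lemma smult_sum_right: "smult c (sum f A) = (\<Sum>x\<in>A. smult c (f x))"
  by (induction A rule: infinite_finite_induct) (simp_all add: smult_add_right)

lemma choose_mult_diff_commute:
  "(m choose a) * ((m - a) choose b) = (m choose b) * ((m - b) choose a)"
proof (cases "a + b \<le> m")
  case True
  have "(m choose a) * ((m - a) choose b) = (m choose (a + b)) * ((a + b) choose a)"
    using choose_mult[of a "a + b" m] True by simp
  also have "\<dots> = (m choose (a + b)) * ((a + b) choose b)"
    by (simp add: binomial_symmetric[of a "a + b"])
  also have "\<dots> = (m choose b) * ((m - b) choose a)"
    using choose_mult[of b "a + b" m] True by simp
  finally show ?thesis .
next
  case False
  then show ?thesis
    by (cases "a \<le> m"; cases "b \<le> m") (simp_all add: binomial_eq_0)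
qed

lemma sum_choose_mult_choose: "(\<Sum>j\<le>k. (k choose j) * (l choose j)) = (k + l) choose k"
proof -
  have "(\<Sum>j\<le>k. (k choose j) * (l choose j)) = (\<Sum>j\<le>k. (l choose j) * (k choose (k - j)))"
    by (intro sum.cong refl) (simp add: binomial_symmetric[symmetric])
  also have "\<dots> = (l + k) choose k"
    by (rule vandermonde)
  finally show ?thesis
    by (simp add: add.commute)
qed

lemma choose_square_eq_sum:
  assumes "k \<le> n"
  shows "(n choose k)\<^sup>2 = (\<Sum>j\<le>k. (n choose (2*j)) * ((2*j) choose j) * ((n - 2*j) choose (k - j)))"
proof -
  have summand: "(n choose (2*j)) * ((2*j) choose j) * ((n - 2*j) choose (k - j))
      = (n choose k) * ((k choose j) * ((n - k) choose j))" if "j \<le> k" for j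
  proof (cases "2*j \<le> n")
    case True
    have "(n choose (2*j)) * ((2*j) choose j) * ((n - 2*j) choose (k - j))
        = (n choose j) * (((n - j) choose j) * ((n - j - j) choose (k - j)))"
      using choose_mult[of j "2*j" n] True by (simp add: mult_2)
    also have "\<dots> = (n choose j) * (((n - j) choose (k - j)) * ((n - j - (k - j)) choose j))"
      by (simp only: choose_mult_diff_commute)
    also have "\<dots> = (n choose k) * ((k choose j) * ((n - k) choose j))"
      using choose_mult[of j k n] that assms by (simp add: mult.assoc)
    finally show ?thesis .
  next
    case False
    then show ?thesis
      using that by (simp add: binomial_eq_0)
  qed
  have "(\<Sum>j\<le>k. (n choose (2*j)) * ((2*j) choose j) * ((n - 2*j) choose (k - j)))
      = (n choose k) * (\<Sum>j\<le>k. (k choose j) * ((n - k) choose j))"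
    by (simp add: summand sum_distrib_left)
  also have "\<dots> = (n choose k)\<^sup>2"
    using assms by (simp add: sum_choose_mult_choose power2_eq_square)
  finally show ?thesis ..
qed

lemma sum_choose_square_powers:
  fixes u v :: "'a :: comm_semiring_1"
  shows "(\<Sum>k\<le>n. of_nat ((n choose k)\<^sup>2) * u ^ k * v ^ (n - k)) =
    (\<Sum>j\<le>n. of_nat ((n choose (2*j)) * ((2*j) choose j)) * (u * v) ^ j * (u + v) ^ (n - 2*j))"
proof -
  define c where "c j i = (n choose (2*j)) * ((2*j) choose j) * ((n - 2*j) choose i)" for j i
  have expand: "of_nat ((n choose (2*j)) * ((2*j) choose j)) * (u * v) ^ j * (u + v) ^ (n - 2*j)
      = (\<Sum>i\<le>n - j. of_nat (c j i) * u ^ (j + i) * v ^ (n - (j + i)))" for j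
  proof (cases "2*j \<le> n")
    case True
    have "(\<Sum>i\<le>n - j. of_nat (c j i) * u ^ (j + i) * v ^ (n - (j + i)))
        = (\<Sum>i\<le>n - 2*j. of_nat (c j i) * u ^ (j + i) * v ^ (n - (j + i)))"
      by (rule sum.mono_neutral_right) (auto simp: c_def binomial_eq_0)
    also have "\<dots> = (\<Sum>i\<le>n - 2*j. of_nat ((n choose (2*j)) * ((2*j) choose j)) * (u * v) ^ j
                    * (of_nat ((n - 2*j) choose i) * u ^ i * v ^ (n - 2*j - i)))"
    proof (intro sum.cong refl)
      fix i assume "i \<in> {..n - 2*j}"
      with True have "n - (j + i) = j + (n - 2*j - i)"
        by auto
      then show "of_nat (c j i) * u ^ (j + i) * v ^ (n - (j + i))
          = of_nat ((n choose (2*j)) * ((2*j) choose j)) * (u * v) ^ j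
            * (of_nat ((n - 2*j) choose i) * u ^ i * v ^ (n - 2*j - i))"
        by (simp add: c_def power_add power_mult_distrib mult_ac)
    qed
    finally show ?thesis
      by (simp add: binomial_ring sum_distrib_left)
  qed (simp add: c_def binomial_eq_0)
  have "(\<Sum>j\<le>n. of_nat ((n choose (2*j)) * ((2*j) choose j)) * (u * v) ^ j * (u + v) ^ (n - 2*j))
      = (\<Sum>(j, i)\<in>{(j, i). j + i \<le> n}. of_nat (c j i) * u ^ (j + i) * v ^ (n - (j + i)))"
  proof -
    have "{(j, i). j + i \<le> n} = Sigma {..n} (\<lambda>j. {..n - j})"
      by auto
    then show ?thesis
      unfolding expand by (simp add: sum.Sigma)
  qed
  also have "\<dots> = (\<Sum>k\<le>n. \<Sum>j\<le>k. of_nat (c j (k - j)) * u ^ k * v ^ (n - k))"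
    by (subst sum.triangle_reindex_eq) (intro sum.cong refl; simp)
  also have "\<dots> = (\<Sum>k\<le>n. of_nat ((n choose k)\<^sup>2) * u ^ k * v ^ (n - k))"
    by (intro sum.cong refl)
      (simp add: choose_square_eq_sum c_def of_nat_sum sum_distrib_right)
  finally show ?thesis ..
qed

lemma dfact_Suc_mult: "dfact (Suc n) * dfact n = fact (Suc n)"
proof (induction n)
  case (Suc n)
  have "dfact (Suc (Suc n)) * dfact (Suc n) = Suc (Suc n) * (dfact (Suc n) * dfact n)"
    by (simp add: algebra_simps)
  then show ?case
    by (simp add: Suc.IH)
qed simp

lemma dfact_even: "dfact (2*j) = 2 ^ j * fact j"
  by (induction j) (simp_all add: algebra_simps)

lemma dfact_odd_div_even: "real (dfact (2*j - 1)) / real (dfact (2*j)) = real ((2*j) choose j) / 4 ^ j"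
proof -
  have "dfact (2*j) * dfact (2*j - 1) = fact (2*j)"
    using dfact_Suc_mult[of "2*j - 1"] by (cases j) simp_all
  then have prod: "real (dfact (2*j)) * real (dfact (2*j - 1)) = fact (2*j)"
    by (metis of_nat_fact of_nat_mult)
  have "real (dfact (2*j - 1)) / real (dfact (2*j))
      = real (dfact (2*j)) * real (dfact (2*j - 1)) / real (dfact (2*j)) ^ 2"
    by (simp add: dfact_even power2_eq_square)
  also have "\<dots> = fact (2*j) / (fact j * fact j) / 4 ^ j"
  proof -
    have "(4::real) ^ j = 2 ^ j * 2 ^ j"
      by (simp flip: power_mult_distrib)
    then show ?thesis
      unfolding prod by (simp add: dfact_even power2_eq_square)
  qed
  also have "\<dots> = real ((2*j) choose j) / 4 ^ j"
    by (simp add: binomial_fact mult_2)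
  finally show ?thesis .
qed

lemma all_nat_even_odd: "(\<forall>n::nat. P n) \<longleftrightarrow> (\<forall>k. P (2*k) \<and> P (2*k + 1))"
  by (metis oddE evenE)

lemma represents_unique:
  assumes "represents Q S" and "represents Q' S"
  shows "Q = Q'"
proof
  fix n
  show "Q n = Q' n"
  proof (induction n rule: less_induct)
    case (less n)
    define G where
      "G (R :: nat \<Rightarrow> real poly) k = smult (1 / fact k) (R k * (pderiv ^^ k) ([:0, 1:] ^ n))" for R k
    have "S ([:0, 1:] ^ n) = (\<Sum>k\<le>n. G R k)" if "represents R S" for R
      using that[unfolded represents_def, rule_format, of "[:0, 1:] ^ n"]
      by (simp only: degree_linear_power G_def)
    then have "(\<Sum>k<n. G Q k) + G Q n = (\<Sum>k<n. G Q' k) + G Q' n"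
      using assms by (metis lessThan_Suc_atMost sum.lessThan_Suc)
    moreover have "(\<Sum>k<n. G Q k) = (\<Sum>k<n. G Q' k)"
      using less by (simp add: G_def)
    moreover have "G R n = R n" for R
      by (simp add: G_def higher_pderiv_linear_power)
    ultimately show ?case
      by simp
  qed
qed

lemma represents_linear_extension:
  assumes "\<And>n. f n = (\<Sum>k\<le>n. smult (1 / fact k) (Q k * (pderiv ^^ k) ([:0, 1:] ^ n)))"
  shows "represents Q (\<lambda>p. \<Sum>i\<le>degree p. smult (coeff p i) (f i))"
  unfolding represents_def
proof
  fix p :: "real poly"
  define G where "G i k = smult (1 / fact k) (Q k * (pderiv ^^ k) ([:0, 1:] ^ i))" for i k
  have p_expansion: "p = (\<Sum>i\<le>degree p. smult (coeff p i) ([:0, 1:] ^ i))"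
    unfolding monom_altdef[symmetric] poly_as_sum_of_monoms ..
  have higher_pderiv_p:
    "(pderiv ^^ k) p = (\<Sum>i\<le>degree p. smult (coeff p i) ((pderiv ^^ k) ([:0, 1:] ^ i)))" for k
    by (subst p_expansion) (simp add: higher_pderiv_sum higher_pderiv_smult)
  have "(\<Sum>k\<le>degree p. smult (1 / fact k) (Q k * (pderiv ^^ k) p))
      = (\<Sum>k\<le>degree p. \<Sum>i\<le>degree p. smult (coeff p i) (G i k))"
    unfolding higher_pderiv_p G_def by (simp add: sum_distrib_left smult_sum_right)
  also have "\<dots> = (\<Sum>i\<le>degree p. smult (coeff p i) (\<Sum>k\<le>degree p. G i k))"
    by (subst sum.swap) (simp add: smult_sum_right)
  also have "\<dots> = (\<Sum>i\<le>degree p. smult (coeff p i) (f i))"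
  proof (intro sum.cong refl arg_cong[where f = "smult _"])
    fix i assume "i \<in> {..degree p}"
    then have "(\<Sum>k\<le>degree p. G i k) = (\<Sum>k\<le>i. G i k)"
      by (intro sum.mono_neutral_right) (auto simp: G_def higher_pderiv_linear_power)
    then show "(\<Sum>k\<le>degree p. G i k) = f i"
      by (simp add: assms G_def)
  qed
  finally show "(\<Sum>i\<le>degree p. smult (coeff p i) (f i))
      = (\<Sum>k\<le>degree p. smult (1 / fact k) (Q k * (pderiv ^^ k) p))" ..
qed

lemma legendreP_eq_sum_choose_square:
  "legendreP n =
    smult (1 / 2 ^ n) (\<Sum>k\<le>n. of_nat ((n choose k)\<^sup>2) * [:1, 1:] ^ k * [:-1, 1:] ^ (n - k))"
proof -
  have "(pderiv ^^ n) ([:-1, 0, 1:] ^ n) = (pderiv ^^ n) ([:-1, 1:] ^ n * [:1, 1 :: real:] ^ n)"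
    by (simp flip: power_mult_distrib)
  also have "\<dots> = (\<Sum>k\<le>n.
      smult (fact n) (of_nat ((n choose k)\<^sup>2) * [:1, 1:] ^ k * [:-1, 1:] ^ (n - k)))"
    unfolding higher_pderiv_mult
  proof (intro sum.cong refl)
    fix k assume "k \<in> {..n}"
    then have kn: "k \<le> n"
      by simp
    have "real (n choose k) * (fact n / fact (n - k)) * (fact n / fact k)
        = fact n * real ((n choose k)\<^sup>2)"
      using kn by (simp add: binomial_fact power2_eq_square mult_ac)
    then show "smult (of_nat (n choose k))
          ((pderiv ^^ k) ([:-1, 1 :: real:] ^ n) * (pderiv ^^ (n - k)) ([:1, 1:] ^ n))
        = smult (fact n) (of_nat ((n choose k)\<^sup>2) * [:1, 1:] ^ k * [:-1, 1:] ^ (n - k))"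
      using kn unfolding higher_pderiv_linear_power by (simp add: of_nat_poly mult_ac)
  qed
  finally show ?thesis
    by (simp add: legendreP_def flip: smult_sum_right)
qed

lemma legendreP_eq_sum_powers:
  "legendreP n = (\<Sum>j\<le>n. smult (real ((n choose (2*j)) * ((2*j) choose j)) / 4 ^ j)
     ([:-1, 0, 1:] ^ j * [:0, 1:] ^ (n - 2*j)))"
proof -
  have uv: "[:1, 1:] * [:-1, 1:] = [:-1, 0, 1 :: real:]"
    by simp
  have u_plus_v: "([:1, 1:] + [:-1, 1:]) ^ m = smult (2 ^ m) ([:0, 1 :: real:] ^ m)" for m
    by (simp flip: smult_power)
  have scalar: "2 ^ (n - 2*j) * real ((n choose (2*j)) * ((2*j) choose j)) / 2 ^ n
      = real ((n choose (2*j)) * ((2*j) choose j)) / 4 ^ j" for j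
  proof (cases "2*j \<le> n")
    case True
    then have "(2::real) ^ n = 2 ^ (2*j) * 2 ^ (n - 2*j)"
      by (simp flip: power_add)
    then have "(2::real) ^ n = 4 ^ j * 2 ^ (n - 2*j)"
      by (simp add: power_mult)
    then show ?thesis
      by simp
  qed (simp add: binomial_eq_0)
  show ?thesis
    unfolding legendreP_eq_sum_choose_square sum_choose_square_powers uv u_plus_v
    by (simp add: smult_sum_right of_nat_poly scalar flip: of_nat_mult)
qed

definition legendreQ :: "nat \<Rightarrow> real poly" where
  "legendreQ k =
    (if even k then smult (real (dfact (k - 1)) / real (dfact k)) ([:-1, 0, 1:] ^ (k div 2)) else 0)"

lemma legendreQ_even: "legendreQ (2*j) = smult (real ((2*j) choose j) / 4 ^ j) ([:-1, 0, 1:] ^ j)"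
  unfolding legendreQ_def dfact_odd_div_even by simp

lemma legendreQ_even_term:
  "smult (1 / fact (2*j)) (legendreQ (2*j) * (pderiv ^^ (2*j)) ([:0, 1:] ^ n)) =
    smult (real ((n choose (2*j)) * ((2*j) choose j)) / 4 ^ j) ([:-1, 0, 1:] ^ j * [:0, 1:] ^ (n - 2*j))"
proof (cases "2*j \<le> n")
  case True
  have "1 / fact (2*j) * (real ((2*j) choose j) / 4 ^ j) * (fact n / fact (n - 2*j))
      = real ((n choose (2*j)) * ((2*j) choose j)) / 4 ^ j"
    using True by (simp add: binomial_fact)
  then show ?thesis
    using True unfolding legendreQ_even higher_pderiv_linear_power by (simp add: mult_ac)
qed (simp add: higher_pderiv_linear_power binomial_eq_0)

lemma legendreP_eq_sum_legendreQ:
  "legendreP n = (\<Sum>k\<le>n. smult (1 / fact k) (legendreQ k * (pderiv ^^ k) ([:0, 1:] ^ n)))"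
proof -
  define F where "F k = smult (1 / fact k) (legendreQ k * (pderiv ^^ k) ([:0, 1:] ^ n))" for k
  have "(\<Sum>k\<le>n. F k) = (\<Sum>k\<le>Suc (2*n). F k)"
    by (rule sum.mono_neutral_left) (auto simp: F_def higher_pderiv_linear_power)
  also have "\<dots> = (\<Sum>j\<le>n. F (2*j) + F (Suc (2*j)))"
    by (rule sum.in_pairs_0)
  also have "\<dots> = (\<Sum>j\<le>n. F (2*j))"
    by (simp add: F_def legendreQ_def)
  also have "\<dots> = legendreP n"
    by (simp add: F_def legendreQ_even_term legendreP_eq_sum_powers)
  finally show ?thesis
    by (simp add: F_def)
qed

theorem theorem7p4:
  fixes Q :: "nat \<Rightarrow> real poly"
  shows "represents Q legendreT \<longleftrightarrow>
    (\<forall>k. Q (2*k+1) = 0 \<and>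
         Q (2*k) = smult (real (dfact (2*k-1)) / real (dfact (2*k))) ([:-1, 0, 1:] ^ k))"
proof -
  have "represents legendreQ legendreT"
    unfolding legendreT_def[abs_def]
    by (rule represents_linear_extension[OF legendreP_eq_sum_legendreQ])
  then have "represents Q legendreT \<longleftrightarrow> Q = legendreQ"
    by (metis represents_unique)
  also have "\<dots> \<longleftrightarrow> (\<forall>n. Q n = legendreQ n)"
    by (simp add: fun_eq_iff)
  also have "\<dots> \<longleftrightarrow> (\<forall>k. Q (2*k) = legendreQ (2*k) \<and> Q (2*k + 1) = legendreQ (2*k + 1))"
    by (rule all_nat_even_odd)
  finally show ?thesis
    by (auto simp: legendreQ_def)
qed

end
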